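(* Let $n\ge 2$, and let $S$ be a semitransitive subsemigroup of $\mathcal{I}_n\setminus\mathcal{S}_n$ with $|S|\le 2n$, let $g,h$ be its two non-zero idempotents, and let $S'=gSg\cup gSh\cup hSg\cup hSh$. Let $\varphi\in S'$ be nilpotent. Then for every $x\in\mathrm{dom}(\varphi)$, if $x\in X_i$ and $x\varphi\in X_j$, then $j>i$. In particular, a nilpotent element of $S'$ has no arrow from a transitivity block to itself.
   Context: $\mathcal{I}_n$ denotes the symmetric inverse semigroup of all partial injective maps of $X=\{1,\dots,n\}$ to itself, with maps written on the right and composed left to right; $0$ denotes the empty map, and $\varphi$ is nilpotent if $\varphi^k=0$ for some $k$. $\mathcal{S}_n$ is the symmetric group on $X$. A semigroup $S$ of partial transformations of $X$ is semitransitive if for all $x,y\in X$ there is $\varphi\in S$ with $x\varphi=y$ or $y\varphi=x$. It is known that such an $S$ (semitransitive in $\mathcal{I}_n\setminus\mathcal{S}_n$, $|S|\le 2n$) has exactly two non-zero idempotents $g,h$, with disjoint domains whose union is $X$. For $x,y\in X$ write $x\ge y$ if $x\varphi=y$ for some $\varphi\in S$; this is a total preorder, and its equivalence classes are the transitivity blocks $X_1,\dots,X_m$, numbered so that for $x\in X_i$, $y\in X_j$ one has $x\ge y$ iff $i\le j$. An element $\alpha$ has an arrow $x\to y$ if $x\in\mathrm{dom}(\alpha)$ and $x\alpha=y$. *)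

theory Defs
  imports Main
begin

text \<open>Partial transformations of X = {1..n} are represented as maps nat => nat option.
  Maps are written on the right and composed left to right: x(f g) = (x f) g.\<close>

type_synonym pmap = "nat \<Rightarrow> nat option"

definition X :: "nat \<Rightarrow> nat set" where
  "X n = {1..n}"

definition in_In :: "nat \<Rightarrow> pmap \<Rightarrow> bool" where
  "in_In n f \<longleftrightarrow> dom f \<subseteq> X n \<and> ran f \<subseteq> X n \<and> inj_on f (dom f)"

definition in_Sn :: "nat \<Rightarrow> pmap \<Rightarrow> bool" where
  "in_Sn n f \<longleftrightarrow> in_In n f \<and> dom f = X n \<and> ran f = X n"

definition pcomp :: "pmap \<Rightarrow> pmap \<Rightarrow> pmap" where
  "pcomp f g = g \<circ>\<^sub>m f"

text \<open>Powers f^(k+1).\<close>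
fun ppow :: "nat \<Rightarrow> pmap \<Rightarrow> pmap" where
  "ppow 0 f = f"
| "ppow (Suc k) f = pcomp (ppow k f) f"

definition nilpotent :: "pmap \<Rightarrow> bool" where
  "nilpotent f \<longleftrightarrow> (\<exists>k. ppow k f = Map.empty)"

definition idempotent :: "pmap \<Rightarrow> bool" where
  "idempotent e \<longleftrightarrow> pcomp e e = e"

definition subsemigroup_In :: "nat \<Rightarrow> pmap set \<Rightarrow> bool" where
  "subsemigroup_In n S \<longleftrightarrow> S \<noteq> {} \<and> (\<forall>f\<in>S. in_In n f)
     \<and> (\<forall>f\<in>S. \<forall>g\<in>S. pcomp f g \<in> S)"

definition semitransitive :: "nat \<Rightarrow> pmap set \<Rightarrow> bool" where
  "semitransitive n S \<longleftrightarrow>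
     (\<forall>x\<in>X n. \<forall>y\<in>X n. \<exists>\<phi>\<in>S. \<phi> x = Some y \<or> \<phi> y = Some x)"

definition reach :: "pmap set \<Rightarrow> nat \<Rightarrow> nat \<Rightarrow> bool" where
  "reach S x y \<longleftrightarrow> (\<exists>\<phi>\<in>S. \<phi> x = Some y)"

text \<open>A numbering of the transitivity blocks: blk x = i means x \<in> X_i, and
  for x \<in> X_i, y \<in> X_j we have x \<ge> y iff i \<le> j.\<close>
definition block_numbering :: "nat \<Rightarrow> pmap set \<Rightarrow> (nat \<Rightarrow> nat) \<Rightarrow> bool" where
  "block_numbering n S blk \<longleftrightarrow>
     blk ` X n = {1..card (blk ` X n)} \<and>
     (\<forall>x\<in>X n. \<forall>y\<in>X n. reach S x y \<longleftrightarrow> blk x \<le> blk y)"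

definition S_prime :: "pmap set \<Rightarrow> pmap \<Rightarrow> pmap \<Rightarrow> pmap set" where
  "S_prime S g h = {pcomp (pcomp a s) b | a s b. a \<in> {g, h} \<and> s \<in> S \<and> b \<in> {g, h}}"

end

theory Submission
  imports Defs
begin

(* Every element of S' lies in S.  Suppose a nilpotent phi in S has an arrow
   x -> y with blk y <= blk x, so that some psi in S maps y back to x.  Then phi psi fixes x
   and psi phi fixes y, and equal powers e of phi psi and f of psi phi are idempotent, hence
   (fixing a point) equal to g or h.  If e = f, phi maps the fixed points of e into themselves,
   so no power of phi vanishes.  If e /= f, then {e, f} = {g, h}, whose domains partition X.
   A top element t of the preorder lies in one of them, say dom e; conjugation links t to a
   point s fixed by f through a product mu of phi and psi with mu s = t.  With sigma_v sending
   t to v, the maps e sigma_v, f mu sigma_v and 0 = ef are 2n+1 distinct elements of S,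
   contradicting |S| <= 2n. *)

section \<open>Composition and powers of partial maps\<close>

lemma pcomp_apply: "pcomp f g x = (case f x of None \<Rightarrow> None | Some y \<Rightarrow> g y)"
  by (simp add: pcomp_def map_comp_def)

lemma pcomp_assoc: "pcomp (pcomp a b) c = pcomp a (pcomp b c)"
  by (rule ext) (simp add: pcomp_apply split: option.split)

lemma ppow_Suc_left: "ppow (Suc k) f = pcomp f (ppow k f)"
  by (induction k) (simp_all add: pcomp_assoc)

text \<open>Exponent law; recall that ppow k f is the (k+1)-st power of f.\<close>
lemma ppow_add: "pcomp (ppow a f) (ppow b f) = ppow (a + b + 1) f"
proof (induction b)
  case 0
  then show ?case by simp
next
  case (Suc b)
  have "pcomp (ppow a f) (ppow (Suc b) f) = pcomp (pcomp (ppow a f) (ppow b f)) f"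
    by (simp add: pcomp_assoc)
  also have "\<dots> = ppow (Suc (a + b + 1)) f"
    using Suc by simp
  finally show ?case by simp
qed

lemma ppow_closed:
  assumes "\<forall>a\<in>S. \<forall>b\<in>S. pcomp a b \<in> S" and "f \<in> S"
  shows "ppow k f \<in> S"
  using assms by (induction k) auto

lemma ppow_fixpoint: "f x = Some x \<Longrightarrow> ppow k f x = Some x"
  by (induction k) (simp_all add: pcomp_apply)

lemma ppow_periodic:
  assumes eq: "ppow i f = ppow j f" and "i < j" and "i \<le> a"
  shows "ppow (a + m * (j - i)) f = ppow a f"
proof (induction m)
  case 0
  then show ?case by simp
next
  case (Suc m)
  have shift: "ppow (i + r) f = ppow (j + r) f" for r
    using eq by (induction r) simp_all
  obtain r where r: "a + m * (j - i) = i + r"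
    using \<open>i \<le> a\<close> le_Suc_ex trans_le_add1 by metis
  have "a + Suc m * (j - i) = (a + m * (j - i)) + (j - i)"
    by simp
  also have "\<dots> = j + r"
    using r \<open>i < j\<close> by simp
  finally have "ppow (a + Suc m * (j - i)) f = ppow (j + r) f"
    by simp
  also have "\<dots> = ppow (a + m * (j - i)) f"
    using shift r by simp
  finally show ?case using Suc by simp
qed

lemma idempotent_power_exists:
  assumes closed: "\<forall>a\<in>S. \<forall>b\<in>S. pcomp a b \<in> S" and "finite S" and "f \<in> S"
  shows "\<exists>k. idempotent (ppow k f)"
proof -
  have "range (\<lambda>i. ppow i f) \<subseteq> S"
    using ppow_closed[OF closed \<open>f \<in> S\<close>] by auto
  then have "\<not> inj (\<lambda>i. ppow i f)"
    using \<open>finite S\<close> by (meson finite_imageD finite_subset infinite_UNIV_nat)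
  then obtain i j where "i \<noteq> j" "ppow i f = ppow j f"
    unfolding inj_def by blast
  then obtain i j where ij: "i < j" "ppow i f = ppow j f"
    by (metis linorder_neqE_nat)
  define K where "K = (j - i) * (i + 1) - 1"
  have K: "K + 1 = (j - i) * (i + 1)"
    using ij(1) K_def by simp
  moreover have "1 * (i + 1) \<le> (j - i) * (i + 1)"
    using ij(1) by (intro mult_le_mono1) simp
  ultimately have "i \<le> K"
    by simp
  have "K + K + 1 = K + (i + 1) * (j - i)"
    using K by (simp add: mult.commute)
  then have "pcomp (ppow K f) (ppow K f) = ppow (K + (i + 1) * (j - i)) f"
    by (metis ppow_add)
  also have "\<dots> = ppow K f"
    using ppow_periodic[OF ij(2) ij(1) \<open>i \<le> K\<close>, of "i + 1"] .
  finally show ?thesis unfolding idempotent_def by blast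
qed

lemma idempotent_ppow_repeat:
  assumes "idempotent (ppow k f)"
  shows "ppow (m * (k + 1) + k) f = ppow k f"
proof (induction m)
  case 0
  then show ?case by simp
next
  case (Suc m)
  have "ppow (Suc m * (k + 1) + k) f = pcomp (ppow (m * (k + 1) + k) f) (ppow k f)"
    using ppow_add[of "m * (k + 1) + k" f k] by (simp add: algebra_simps)
  then show ?case
    using Suc assms unfolding idempotent_def by simp
qed

text \<open>Two elements of a finite semigroup have idempotent powers with a common exponent,
  which may moreover be taken positive (ppow (Suc Q) is at least a square).\<close>
lemma common_idempotent_power:
  assumes closed: "\<forall>a\<in>S. \<forall>b\<in>S. pcomp a b \<in> S" and "finite S" and "f1 \<in> S" and "f2 \<in> S"
  shows "\<exists>Q. idempotent (ppow (Suc Q) f1) \<and> idempotent (ppow (Suc Q) f2)"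
proof -
  obtain k1 k2 where k1: "idempotent (ppow k1 f1)" and k2: "idempotent (ppow k2 f2)"
    using idempotent_power_exists assms by metis
  define P where "P = k2 * (k1 + 1) + k1"
  have P1: "ppow P f1 = ppow k1 f1"
    unfolding P_def using idempotent_ppow_repeat[OF k1] .
  have P2: "ppow P f2 = ppow k2 f2"
    using idempotent_ppow_repeat[OF k2, of k1] unfolding P_def by (simp add: algebra_simps)
  have "ppow (Suc (2 * P)) f = pcomp (ppow P f) (ppow P f)" for f
    using ppow_add[of P f P] by (simp add: mult_2)
  then have "ppow (Suc (2 * P)) f1 = ppow k1 f1" "ppow (Suc (2 * P)) f2 = ppow k2 f2"
    using P1 P2 k1 k2 unfolding idempotent_def by simp_all
  then show ?thesis using k1 k2 by metis
qed

section \<open>Conjugation\<close>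

lemma pcomp_ppow_conjugate:
  "pcomp \<phi> (ppow k (pcomp \<psi> \<phi>)) = pcomp (ppow k (pcomp \<phi> \<psi>)) \<phi>"
proof (induction k)
  case 0
  then show ?case by (simp add: pcomp_assoc)
next
  case (Suc k)
  have "pcomp \<phi> (ppow (Suc k) (pcomp \<psi> \<phi>))
      = pcomp (pcomp \<phi> (ppow k (pcomp \<psi> \<phi>))) (pcomp \<psi> \<phi>)"
    by (simp add: pcomp_assoc)
  also have "\<dots> = pcomp (ppow (Suc k) (pcomp \<phi> \<psi>)) \<phi>"
    using Suc by (simp add: pcomp_assoc)
  finally show ?case .
qed

lemma fixpoint_transfer:
  assumes "ppow k (pcomp \<phi> \<psi>) z = Some z"
  shows "\<exists>s. \<phi> z = Some s \<and> ppow k (pcomp \<psi> \<phi>) s = Some s"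
proof -
  have "pcomp \<phi> \<psi> z \<noteq> None"
  proof
    assume "pcomp \<phi> \<psi> z = None"
    then have "ppow k (pcomp \<phi> \<psi>) z = None"
      by (induction k) (simp_all add: pcomp_apply split: option.split)
    with assms show False by simp
  qed
  then obtain s where s: "\<phi> z = Some s"
    by (auto simp: pcomp_apply split: option.splits)
  have "pcomp (ppow k (pcomp \<phi> \<psi>)) \<phi> z = Some s"
    using assms s by (simp add: pcomp_apply)
  then have "ppow k (pcomp \<psi> \<phi>) s = Some s"
    using s by (simp add: pcomp_ppow_conjugate[symmetric] pcomp_apply)
  with s show ?thesis by blast
qed

lemma fixpoint_bridge:
  assumes "ppow (Suc k) (pcomp \<phi> \<psi>) t = Some t"
  shows "\<exists>s. ppow (Suc k) (pcomp \<psi> \<phi>) s = Some s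
             \<and> pcomp \<psi> (ppow k (pcomp \<phi> \<psi>)) s = Some t"
proof -
  obtain s where s: "\<phi> t = Some s" "ppow (Suc k) (pcomp \<psi> \<phi>) s = Some s"
    using fixpoint_transfer[OF assms] by blast
  have "ppow (Suc k) (pcomp \<phi> \<psi>) = pcomp \<phi> (pcomp \<psi> (ppow k (pcomp \<phi> \<psi>)))"
    by (simp only: ppow_Suc_left pcomp_assoc)
  then have "pcomp \<psi> (ppow k (pcomp \<phi> \<psi>)) s = Some t"
    using assms s(1) by (simp add: pcomp_apply)
  with s(2) show ?thesis by blast
qed

lemma invariant_set_not_nilpotent:
  assumes "x \<in> A" and invariant: "\<forall>z\<in>A. \<exists>s\<in>A. \<phi> z = Some s"
  shows "\<not> nilpotent \<phi>"
proof -
  have "\<exists>z\<in>A. ppow k \<phi> x = Some z" for k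
  proof (induction k)
    case 0
    then show ?case using invariant \<open>x \<in> A\<close> by simp
  next
    case (Suc k)
    then obtain z where "z \<in> A" "ppow k \<phi> x = Some z" by blast
    then show ?case using invariant by (fastforce simp: pcomp_apply)
  qed
  then show ?thesis
    unfolding nilpotent_def by (metis option.distinct(1))
qed

text \<open>If phi psi and psi phi have a common power with a fixed point, phi is not nilpotent:
  by the transfer lemma phi maps the fixed points of that power into themselves.\<close>
lemma equal_conjugate_powers_not_nilpotent:
  assumes "ppow k (pcomp \<phi> \<psi>) = ppow k (pcomp \<psi> \<phi>)" and "ppow k (pcomp \<phi> \<psi>) x = Some x"
  shows "\<not> nilpotent \<phi>"
proof (rule invariant_set_not_nilpotent)
  show "x \<in> {z. ppow k (pcomp \<phi> \<psi>) z = Some z}"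
    using assms(2) by simp
  show "\<forall>z\<in>{z. ppow k (pcomp \<phi> \<psi>) z = Some z}.
          \<exists>s\<in>{z. ppow k (pcomp \<phi> \<psi>) z = Some z}. \<phi> z = Some s"
    using fixpoint_transfer assms(1) by fastforce
qed

section \<open>Partial identities\<close>

definition partial_identity :: "pmap \<Rightarrow> bool" where
  "partial_identity e \<longleftrightarrow> (\<forall>x\<in>dom e. e x = Some x)"

lemma idempotent_partial_identity:
  assumes "in_In n e" and "idempotent e"
  shows "partial_identity e"
  unfolding partial_identity_def
proof
  fix z assume "z \<in> dom e"
  then obtain w where w: "e z = Some w" by blast
  have "e w = Some w"
    using assms(2) w unfolding idempotent_def by (metis pcomp_apply option.simps(5))
  moreover have "inj_on e (dom e)"
    using assms(1) unfolding in_In_def by simp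
  ultimately have "w = z"
    using w unfolding inj_on_def by (metis domI)
  with w show "e z = Some z" by simp
qed

lemma partial_identity_pcomp_apply:
  "partial_identity e \<Longrightarrow> pcomp e f x = (if x \<in> dom e then f x else None)"
  unfolding partial_identity_def by (auto simp: pcomp_apply split: option.split)

lemma partial_identity_pcomp:
  assumes "partial_identity e" and "partial_identity f"
  shows "partial_identity (pcomp e f)" and "dom (pcomp e f) = dom e \<inter> dom f"
  using assms unfolding partial_identity_def
  by (auto simp: partial_identity_pcomp_apply[OF assms(1)] split: if_splits)

lemma partial_identity_idempotent: "partial_identity e \<Longrightarrow> idempotent e"
  unfolding idempotent_def by (rule ext) (auto simp: partial_identity_pcomp_apply partial_identity_def)

lemma total_partial_identity_in_Sn:
  assumes "in_In n e" and "partial_identity e" and "X n \<subseteq> dom e"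
  shows "in_Sn n e"
proof -
  have "ran e = dom e"
  proof
    show "ran e \<subseteq> dom e"
    proof
      fix v assume "v \<in> ran e"
      then obtain u where u: "e u = Some v"
        unfolding ran_def by blast
      then have "e u = Some u"
        using assms(2) unfolding partial_identity_def by blast
      with u show "v \<in> dom e" by auto
    qed
    show "dom e \<subseteq> ran e"
      using assms(2) unfolding partial_identity_def by (auto intro: ranI)
  qed
  moreover have "dom e = X n"
    using assms(1,3) unfolding in_In_def by blast
  ultimately show ?thesis using assms(1) unfolding in_Sn_def by simp
qed

section \<open>Fans\<close>

text \<open>Given maps sigma_v sending a point q to v, the fan of rho consists of the n products
  rho sigma_v (v in X).  If rho sends p to q, its members are told apart by their value at p.\<close>
definition fan :: "pmap \<Rightarrow> (nat \<Rightarrow> pmap) \<Rightarrow> nat \<Rightarrow> pmap set" where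
  "fan \<rho> \<sigma> n = (\<lambda>v. pcomp \<rho> (\<sigma> v)) ` X n"

lemma fan_apply:
  assumes "\<rho> p = Some q" and "\<forall>v\<in>X n. \<sigma> v q = Some v" and "v \<in> X n"
  shows "pcomp \<rho> (\<sigma> v) p = Some v"
  using assms by (simp add: pcomp_apply)

lemma card_fan:
  assumes "\<rho> p = Some q" and "\<forall>v\<in>X n. \<sigma> v q = Some v"
  shows "card (fan \<rho> \<sigma> n) = n"
proof -
  have "inj_on (\<lambda>v. pcomp \<rho> (\<sigma> v)) (X n)"
    by (rule inj_onI) (metis fan_apply[where \<rho> = \<rho> and \<sigma> = \<sigma>, OF assms] option.inject)
  then show ?thesis
    unfolding fan_def by (simp add: card_image X_def)
qed

lemma card_two_fans:
  assumes \<rho>1: "\<rho>1 p1 = Some q" and \<rho>2: "\<rho>2 p2 = Some q" and "\<rho>1 p2 = None"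
    and \<sigma>: "\<forall>v\<in>X n. \<sigma> v q = Some v"
  shows "card (insert Map.empty (fan \<rho>1 \<sigma> n \<union> fan \<rho>2 \<sigma> n)) = 2 * n + 1"
proof -
  have undefined_p2: "a p2 = None" if "a \<in> fan \<rho>1 \<sigma> n" for a
    using that \<open>\<rho>1 p2 = None\<close> unfolding fan_def by (auto simp: pcomp_apply)
  have defined_p1: "a p1 \<noteq> None" if "a \<in> fan \<rho>1 \<sigma> n" for a
    using that fan_apply[where \<rho> = \<rho>1 and \<sigma> = \<sigma>, OF \<rho>1 \<sigma>] unfolding fan_def by auto
  have defined_p2: "b p2 \<noteq> None" if "b \<in> fan \<rho>2 \<sigma> n" for b
    using that fan_apply[where \<rho> = \<rho>2 and \<sigma> = \<sigma>, OF \<rho>2 \<sigma>] unfolding fan_def by auto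
  have "fan \<rho>1 \<sigma> n \<inter> fan \<rho>2 \<sigma> n = {}"
    using undefined_p2 defined_p2 by blast
  moreover have "Map.empty \<notin> fan \<rho>1 \<sigma> n \<union> fan \<rho>2 \<sigma> n"
    using defined_p1[of Map.empty] defined_p2[of Map.empty] by auto
  moreover have "finite (fan \<rho>1 \<sigma> n)" "finite (fan \<rho>2 \<sigma> n)"
    unfolding fan_def by (simp_all add: X_def)
  ultimately show ?thesis
    using card_fan[where \<rho> = \<rho>1 and \<sigma> = \<sigma>, OF \<rho>1 \<sigma>]
      card_fan[where \<rho> = \<rho>2 and \<sigma> = \<sigma>, OF \<rho>2 \<sigma>]
    by (simp add: card_Un_disjoint)
qed

section \<open>Small semitransitive semigroups with two non-zero idempotents\<close>

locale two_idempotent_semigroup =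
  fixes n :: nat and S :: "pmap set" and g h :: pmap
  assumes subsemigroup: "subsemigroup_In n S"
    and no_permutation: "\<forall>f\<in>S. \<not> in_Sn n f"
    and semitransitive: "semitransitive n S"
    and finite_S: "finite S" and small: "card S \<le> 2 * n"
    and g_in: "g \<in> S" and h_in: "h \<in> S"
    and idempotent_g: "idempotent g" and idempotent_h: "idempotent h"
    and only_g_h: "\<forall>e\<in>S. idempotent e \<and> e \<noteq> Map.empty \<longrightarrow> e = g \<or> e = h"
begin

lemma closed: "\<forall>a\<in>S. \<forall>b\<in>S. pcomp a b \<in> S"
  using subsemigroup unfolding subsemigroup_In_def by blast

lemma pcomp_in: "a \<in> S \<Longrightarrow> b \<in> S \<Longrightarrow> pcomp a b \<in> S"
  using closed by blast

lemma in_In: "f \<in> S \<Longrightarrow> in_In n f"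
  using subsemigroup unfolding subsemigroup_In_def by blast

lemma S_prime_subset: "S_prime S g h \<subseteq> S"
  using closed g_in h_in unfolding S_prime_def by blast

lemma idempotent_with_fixpoint:
  "e \<in> S \<Longrightarrow> idempotent e \<Longrightarrow> e z = Some z \<Longrightarrow> e = g \<or> e = h"
  using only_g_h by fastforce

text \<open>Semitransitivity lets every point be fixed by some element, hence by g or h.\<close>
lemma domains_cover: "X n \<subseteq> dom g \<union> dom h"
proof
  fix z assume "z \<in> X n"
  then obtain \<sigma> where \<sigma>: "\<sigma> \<in> S" "\<sigma> z = Some z"
    using semitransitive unfolding semitransitive_def by blast
  obtain k where "idempotent (ppow k \<sigma>)"
    using idempotent_power_exists[OF closed finite_S \<sigma>(1)] by blast
  moreover have "ppow k \<sigma> z = Some z" and "ppow k \<sigma> \<in> S"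
    using ppow_fixpoint[of \<sigma> z k, OF \<sigma>(2)] ppow_closed[OF closed \<sigma>(1)] by auto
  ultimately show "z \<in> dom g \<union> dom h"
    using idempotent_with_fixpoint by blast
qed

text \<open>If dom g and dom h met, gh would be a non-zero idempotent, hence g or h; then one
  domain would contain the other and thus be all of X, giving a permutation in S.\<close>
lemma domains_disjoint: "dom g \<inter> dom h = {}"
proof (rule ccontr)
  assume meet: "dom g \<inter> dom h \<noteq> {}"
  have pid_g: "partial_identity g" and pid_h: "partial_identity h"
    using idempotent_partial_identity in_In g_in h_in idempotent_g idempotent_h by blast+
  note gh = partial_identity_pcomp[OF pid_g pid_h]
  obtain z where "z \<in> dom (pcomp g h)"
    using meet gh(2) by blast
  then have "pcomp g h z = Some z"
    using gh(1) unfolding partial_identity_def by blast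
  then have "pcomp g h = g \<or> pcomp g h = h"
    using idempotent_with_fixpoint[OF pcomp_in[OF g_in h_in] partial_identity_idempotent[OF gh(1)]]
    by blast
  then show False
  proof
    assume "pcomp g h = g"
    then have "X n \<subseteq> dom h"
      using gh(2) domains_cover by auto
    then show False
      using total_partial_identity_in_Sn[OF in_In[OF h_in] pid_h] no_permutation h_in by blast
  next
    assume "pcomp g h = h"
    then have "X n \<subseteq> dom g"
      using gh(2) domains_cover by auto
    then show False
      using total_partial_identity_in_Sn[OF in_In[OF g_in] pid_g] no_permutation g_in by blast
  qed
qed

text \<open>The counting argument: if idempotents e, f of S with disjoint domains fix t and s
  respectively, t reaches every point, and some element of S maps s to t, then S has at least
  2n+1 elements, namely 0, the maps e sigma_v and the maps f mu sigma_v.\<close>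
lemma card_lower_bound:
  assumes "e \<in> S" "f \<in> S" "\<mu> \<in> S" and "partial_identity e"
    and "dom e \<inter> dom f = {}"
    and et: "e t = Some t" and fs: "f s = Some s" and \<mu>s: "\<mu> s = Some t"
    and top: "\<forall>v\<in>X n. reach S t v"
  shows "2 * n + 1 \<le> card S"
proof -
  have "\<forall>v\<in>X n. \<exists>\<phi>. \<phi> \<in> S \<and> \<phi> t = Some v"
    using top unfolding reach_def by blast
  then obtain \<sigma> where \<sigma>: "\<forall>v\<in>X n. \<sigma> v \<in> S \<and> \<sigma> v t = Some v"
    by (rule bchoice[elim_format]) blast
  have f\<mu>s: "pcomp f \<mu> s = Some t"
    using fs \<mu>s by (simp add: pcomp_apply)
  have es: "e s = None"
    using fs \<open>dom e \<inter> dom f = {}\<close> by blast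
  have \<sigma>t: "\<forall>v\<in>X n. \<sigma> v t = Some v"
    using \<sigma> by blast
  have card: "card (insert Map.empty (fan e \<sigma> n \<union> fan (pcomp f \<mu>) \<sigma> n)) = 2 * n + 1"
    using card_two_fans[of e t t "pcomp f \<mu>" s n \<sigma>, OF et f\<mu>s es \<sigma>t] .
  have "pcomp e f = Map.empty"
    using \<open>dom e \<inter> dom f = {}\<close>
    by (intro ext) (auto simp: partial_identity_pcomp_apply[OF \<open>partial_identity e\<close>])
  then have "Map.empty \<in> S"
    using pcomp_in[OF \<open>e \<in> S\<close> \<open>f \<in> S\<close>] by simp
  moreover have "fan e \<sigma> n \<subseteq> S" "fan (pcomp f \<mu>) \<sigma> n \<subseteq> S"
    using \<sigma> \<open>e \<in> S\<close> \<open>f \<in> S\<close> \<open>\<mu> \<in> S\<close> unfolding fan_def by (auto intro!: pcomp_in)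
  ultimately have "insert Map.empty (fan e \<sigma> n \<union> fan (pcomp f \<mu>) \<sigma> n) \<subseteq> S"
    by blast
  from card_mono[OF finite_S this] show ?thesis
    using card by simp
qed

lemma conjugate_idempotents_card_bound:
  assumes "\<phi> \<in> S" "\<psi> \<in> S"
    and pid: "partial_identity (ppow (Suc Q) (pcomp \<phi> \<psi>))"
    and disjoint: "dom (ppow (Suc Q) (pcomp \<phi> \<psi>)) \<inter> dom (ppow (Suc Q) (pcomp \<psi> \<phi>)) = {}"
    and fixed: "ppow (Suc Q) (pcomp \<phi> \<psi>) t = Some t"
    and top: "\<forall>v\<in>X n. reach S t v"
  shows "2 * n + 1 \<le> card S"
proof -
  obtain s where fs: "ppow (Suc Q) (pcomp \<psi> \<phi>) s = Some s"
    and \<mu>s: "pcomp \<psi> (ppow Q (pcomp \<phi> \<psi>)) s = Some t"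
    using fixpoint_bridge[OF fixed] by blast
  have in_S: "ppow (Suc Q) (pcomp \<phi> \<psi>) \<in> S" "ppow (Suc Q) (pcomp \<psi> \<phi>) \<in> S"
    and \<mu>_in: "pcomp \<psi> (ppow Q (pcomp \<phi> \<psi>)) \<in> S"
    using ppow_closed[OF closed] pcomp_in assms(1,2) by blast+
  show ?thesis
    using card_lower_bound[OF in_S \<mu>_in pid disjoint fixed fs \<mu>s top] .
qed

text \<open>Equal idempotent powers e of
  phi psi and f of psi phi fix x and y; e = f contradicts nilpotency, e /= f the size of S.\<close>
lemma nilpotent_arrow_not_reversible:
  assumes "\<phi> \<in> S" "\<psi> \<in> S" and "nilpotent \<phi>"
    and xy: "\<phi> x = Some y" and yx: "\<psi> y = Some x"
    and "t \<in> X n" and top: "\<forall>v\<in>X n. reach S t v"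
  shows False
proof -
  obtain Q where idem: "idempotent (ppow (Suc Q) (pcomp \<phi> \<psi>))"
      "idempotent (ppow (Suc Q) (pcomp \<psi> \<phi>))"
    using common_idempotent_power closed finite_S assms(1,2) by blast
  define e where "e = ppow (Suc Q) (pcomp \<phi> \<psi>)"
  define f where "f = ppow (Suc Q) (pcomp \<psi> \<phi>)"
  have in_S: "e \<in> S" "f \<in> S"
    unfolding e_def f_def using ppow_closed closed assms(1,2) by blast+
  have pid: "partial_identity e" "partial_identity f"
    using idem in_S in_In idempotent_partial_identity unfolding e_def f_def by blast+
  have "e x = Some x" "f y = Some y"
    unfolding e_def f_def by (rule ppow_fixpoint, simp add: pcomp_apply xy yx)+
  then have e_gh: "e = g \<or> e = h" and f_gh: "f = g \<or> f = h"
    using idempotent_with_fixpoint in_S idem unfolding e_def f_def by blast+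
  show False
  proof (cases "e = f")
    case True
    then show False
      using equal_conjugate_powers_not_nilpotent \<open>e x = Some x\<close> \<open>nilpotent \<phi>\<close>
      unfolding e_def f_def by blast
  next
    case False
    then have disjoint: "dom e \<inter> dom f = {}"
      using e_gh f_gh domains_disjoint by (metis inf_commute)
    have "t \<in> dom e \<union> dom f"
      using False e_gh f_gh domains_cover \<open>t \<in> X n\<close> by blast
    then have "2 * n + 1 \<le> card S"
    proof
      assume "t \<in> dom e"
      then show ?thesis
        using conjugate_idempotents_card_bound[OF assms(1,2), of Q t] pid(1) disjoint top
        unfolding e_def f_def partial_identity_def by blast
    next
      assume "t \<in> dom f"
      then show ?thesis
        using conjugate_idempotents_card_bound[OF assms(2,1), of Q t] pid(2) disjoint top
        unfolding e_def f_def partial_identity_def by blast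
    qed
    then show False
      using small by linarith
  qed
qed

end

lemma block_numbering_top:
  assumes "block_numbering n S blk" and "n \<ge> 1"
  obtains t where "t \<in> X n" "\<forall>v\<in>X n. reach S t v"
proof -
  have "finite (X n)" "X n \<noteq> {}"
    using assms(2) by (auto simp: X_def)
  then obtain t where "t \<in> X n" "\<forall>v\<in>X n. blk t \<le> blk v"
    using ex_min_if_finite[of "blk ` X n"] by fastforce
  then show ?thesis
    using that assms(1) unfolding block_numbering_def by blast
qed

theorem lemma3p2:
  fixes n :: nat and S :: "pmap set" and g h \<phi> :: pmap and blk :: "nat \<Rightarrow> nat"
  assumes "n \<ge> 2"
    and "subsemigroup_In n S"
    and "\<forall>f\<in>S. \<not> in_Sn n f"
    and "semitransitive n S"
    and "finite S" and "card S \<le> 2 * n"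
    and "g \<in> S" and "h \<in> S" and "g \<noteq> h"
    and "idempotent g" and "idempotent h"
    and "g \<noteq> Map.empty" and "h \<noteq> Map.empty"
    and "\<forall>e\<in>S. idempotent e \<and> e \<noteq> Map.empty \<longrightarrow> e = g \<or> e = h"
    and "block_numbering n S blk"
    and "\<phi> \<in> S_prime S g h" and "nilpotent \<phi>"
  shows "(\<forall>x\<in>dom \<phi>. blk x < blk (the (\<phi> x)))
       \<and> (\<forall>x\<in>dom \<phi>. blk (the (\<phi> x)) \<noteq> blk x)"
proof -
  interpret two_idempotent_semigroup n S g h
    using assms by unfold_locales
  have "\<phi> \<in> S"
    using S_prime_subset \<open>\<phi> \<in> S_prime S g h\<close> by blast
  obtain t where t: "t \<in> X n" "\<forall>v\<in>X n. reach S t v"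
    using block_numbering_top \<open>block_numbering n S blk\<close> \<open>n \<ge> 2\<close> by (metis one_le_numeral order_trans)
  have preorder: "\<forall>x\<in>X n. \<forall>y\<in>X n. reach S x y \<longleftrightarrow> blk x \<le> blk y"
    using \<open>block_numbering n S blk\<close> unfolding block_numbering_def by blast
  have "blk x < blk y" if xy: "\<phi> x = Some y" for x y
  proof -
    have "x \<in> X n" "y \<in> X n"
      using xy in_In[OF \<open>\<phi> \<in> S\<close>] unfolding in_In_def by (auto simp: ran_def)
    moreover have "\<not> reach S y x"
      using nilpotent_arrow_not_reversible[OF \<open>\<phi> \<in> S\<close> _ \<open>nilpotent \<phi>\<close> xy _ t]
      unfolding reach_def by blast
    ultimately show ?thesis
      using preorder not_le by blast
  qed
  then have "\<forall>x\<in>dom \<phi>. blk x < blk (the (\<phi> x))"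
    by auto
  then show ?thesis
    by (metis less_irrefl)
qed

end
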